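(* Let $\Phi_1,\Phi_2:M_n(\mathbb C)\to M_n(\mathbb C)$ be linear maps which are completely positive, trace-preserving and unital. Let $X,Y\in M_n(\mathbb C)$ satisfy $\Phi_1(X)=Y$ and $\Phi_2(Y)=X$. Then $\Phi_1(XW)=Y\Phi_1(W)$ and $\Phi_1(WX)=\Phi_1(W)Y$ for all $W\in M_n(\mathbb C)$. Furthermore, $X$ and $Y$ are cospectral, and $\Phi_1^*(Y)=X$.
   Context: $\Phi^*$ denotes the adjoint of $\Phi$ with respect to the trace inner product $\langle A,B\rangle=\mathrm{tr}(A^*B)$. Unital means $\Phi(I)=I$. *)

theory Defs
  imports "Jordan_Normal_Form.Schur_Decomposition"
begin

definition mat_trace :: "complex mat \<Rightarrow> complex" where
  "mat_trace A = (\<Sum>i<dim_row A. A $$ (i, i))"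

definition psd_mat :: "nat \<Rightarrow> complex mat \<Rightarrow> bool" where
  "psd_mat m A \<longleftrightarrow> A \<in> carrier_mat m m \<and>
     (\<forall>v \<in> carrier_vec m. conjugate v \<bullet> (A *\<^sub>v v) \<in> \<real> \<and> 0 \<le> Re (conjugate v \<bullet> (A *\<^sub>v v)))"

definition linear_map_mat :: "nat \<Rightarrow> (complex mat \<Rightarrow> complex mat) \<Rightarrow> bool" where
  "linear_map_mat n \<Phi> \<longleftrightarrow>
     (\<forall>A \<in> carrier_mat n n. \<Phi> A \<in> carrier_mat n n) \<and>
     (\<forall>A \<in> carrier_mat n n. \<forall>B \<in> carrier_mat n n. \<Phi> (A + B) = \<Phi> A + \<Phi> B) \<and>
     (\<forall>c. \<forall>A \<in> carrier_mat n n. \<Phi> (c \<cdot>\<^sub>m A) = c \<cdot>\<^sub>m \<Phi> A)"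

definition mat_block :: "nat \<Rightarrow> complex mat \<Rightarrow> nat \<Rightarrow> nat \<Rightarrow> complex mat" where
  "mat_block n A i j = mat n n (\<lambda>(a,b). A $$ (i*n + a, j*n + b))"

(* id_k \<otimes> \<Phi> acting blockwise on M_k(M_n) = M_{kn} *)
definition ampliation :: "nat \<Rightarrow> nat \<Rightarrow> (complex mat \<Rightarrow> complex mat) \<Rightarrow> complex mat \<Rightarrow> complex mat" where
  "ampliation k n \<Phi> A = mat (k*n) (k*n)
     (\<lambda>(r,c). \<Phi> (mat_block n A (r div n) (c div n)) $$ (r mod n, c mod n))"

definition completely_positive :: "nat \<Rightarrow> (complex mat \<Rightarrow> complex mat) \<Rightarrow> bool" where
  "completely_positive n \<Phi> \<longleftrightarrow>
     (\<forall>k \<ge> 1. \<forall>A. psd_mat (k*n) A \<longrightarrow> psd_mat (k*n) (ampliation k n \<Phi> A))"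

definition trace_preserving :: "nat \<Rightarrow> (complex mat \<Rightarrow> complex mat) \<Rightarrow> bool" where
  "trace_preserving n \<Phi> \<longleftrightarrow> (\<forall>A \<in> carrier_mat n n. mat_trace (\<Phi> A) = mat_trace A)"

definition unital :: "nat \<Rightarrow> (complex mat \<Rightarrow> complex mat) \<Rightarrow> bool" where
  "unital n \<Phi> \<longleftrightarrow> \<Phi> (1\<^sub>m n) = 1\<^sub>m n"

(* Adjoint of \<Phi> w.r.t. the trace inner product <A,B> = tr(A^* B), evaluated at B *)
definition hs_adjoint :: "nat \<Rightarrow> (complex mat \<Rightarrow> complex mat) \<Rightarrow> complex mat \<Rightarrow> complex mat" where
  "hs_adjoint n \<Phi> B = (THE C. C \<in> carrier_mat n n \<and>
      (\<forall>A \<in> carrier_mat n n. mat_trace (mat_adjoint C * A) = mat_trace (mat_adjoint B * \<Phi> A)))"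

(* cospectral: same eigenvalues with multiplicities *)
definition cospectral :: "complex mat \<Rightarrow> complex mat \<Rightarrow> bool" where
  "cospectral X Y \<longleftrightarrow> char_poly X = char_poly Y"

end

theory Submission
  imports Defs
begin

text \<open>A unital completely positive map \<open>\<Phi>\<close> satisfies the Kadison--Schwarz inequality
  \<open>\<Phi>(Z\<^sup>* Z) \<ge> \<Phi>(Z)\<^sup>* \<Phi>(Z)\<close>: this is positivity of the \<open>\<Phi>\<close>-image of the Gram matrix of
  \<open>(1, Z)\<close>, tested against the block vector \<open>(-\<Phi>(Z) g, g)\<close>. When equality holds, that vector
  is a null vector of the \<open>\<Phi>\<close>-image of the Gram matrix of \<open>(1, Z, W\<^sup>*)\<close>, and reading off its
  third block row gives \<open>\<Phi>(W Z) = \<Phi>(W) \<Phi>(Z)\<close> for every \<open>W\<close>.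

  If \<open>\<Phi>\<^sub>1 X = Y\<close> and \<open>\<Phi>\<^sub>2 Y = X\<close>, the defects \<open>\<Phi>\<^sub>1(X\<^sup>* X) - Y\<^sup>* Y\<close> and
  \<open>\<Phi>\<^sub>2(Y\<^sup>* Y) - X\<^sup>* X\<close> are positive, and trace preservation makes their traces sum to zero,
  so both vanish; the same holds for \<open>X\<^sup>*\<close> and \<open>Y\<^sup>*\<close>. Hence \<open>X\<close> and \<open>X\<^sup>*\<close> lie in
  the multiplicative domain of \<open>\<Phi>\<^sub>1\<close>. This gives the two module identities,
  \<open>\<Phi>\<^sub>1(X\<^sup>k) = Y\<^sup>k\<close> and thus \<open>tr X\<^sup>k = tr Y\<^sup>k\<close> for all \<open>k\<close> (which determines the
  eigenvalues with multiplicities), and \<open>tr(X\<^sup>* A) = tr \<Phi>\<^sub>1(X\<^sup>* A) = tr(Y\<^sup>* \<Phi>\<^sub>1(A))\<close>,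
  i.e. \<open>\<Phi>\<^sub>1\<^sup>*(Y) = X\<close>.\<close>

lemma mat_adjoint_carrier[simp]: "A \<in> carrier_mat n m \<Longrightarrow> mat_adjoint A \<in> carrier_mat m n"
  unfolding mat_adjoint_def by (auto simp: mat_of_rows_def)

lemma mat_adjoint_dim[simp]: "dim_row (mat_adjoint A) = dim_col A" "dim_col (mat_adjoint A) = dim_row A"
  unfolding mat_adjoint_def by (auto simp: mat_of_rows_def)

lemma mat_adjoint_index[simp]:
  "i < dim_col A \<Longrightarrow> j < dim_row A \<Longrightarrow> mat_adjoint A $$ (i, j) = cnj (A $$ (j, i))"
  unfolding mat_adjoint_def by (auto simp: mat_of_rows_def)

lemma mat_adjoint_adjoint[simp]: "mat_adjoint (mat_adjoint A) = (A :: complex mat)"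
  by (rule eq_matI) auto

lemma mat_adjoint_one[simp]: "mat_adjoint (1\<^sub>m n :: complex mat) = 1\<^sub>m n"
  by (rule eq_matI) auto

lemma mat_adjoint_mult:
  fixes A B :: "complex mat"
  assumes "A \<in> carrier_mat n m" "B \<in> carrier_mat m k"
  shows "mat_adjoint (A * B) = mat_adjoint B * mat_adjoint A"
  using assms by (intro eq_matI) (auto simp: scalar_prod_def sum_conjugate ac_simps)

lemma index_mat_adjoint_mult:
  fixes A B :: "complex mat"
  assumes "A \<in> carrier_mat m n" "B \<in> carrier_mat m n" "i < n" "j < n"
  shows "(mat_adjoint A * B) $$ (i, j) = (\<Sum>l<m. cnj (A $$ (l, i)) * B $$ (l, j))"
  using assms by (simp add: scalar_prod_def lessThan_atLeast0)

text \<open>Vectors are handled as functions \<^typ>\<open>nat \<Rightarrow> complex\<close> read on an initial segment,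
  so that a vector with \<^term>\<open>k * n\<close> coordinates can be written blockwise as
  \<^term>\<open>\<lambda>r. f (r div n) (r mod n)\<close> without carrier bookkeeping.\<close>

definition cinner :: "nat \<Rightarrow> (nat \<Rightarrow> complex) \<Rightarrow> (nat \<Rightarrow> complex) \<Rightarrow> complex" where
  "cinner n f g = (\<Sum>a<n. cnj (f a) * g a)"

definition mat_app :: "nat \<Rightarrow> complex mat \<Rightarrow> (nat \<Rightarrow> complex) \<Rightarrow> nat \<Rightarrow> complex" where
  "mat_app n P g = (\<lambda>a. \<Sum>b<n. P $$ (a, b) * g b)"

lemma cinner_add_left: "cinner n (\<lambda>a. f a + g a) h = cinner n f h + cinner n g h"
  unfolding cinner_def by (simp add: ring_distribs sum.distrib)

lemma cinner_add_right: "cinner n h (\<lambda>a. f a + g a) = cinner n h f + cinner n h g"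
  unfolding cinner_def by (simp add: ring_distribs sum.distrib)

lemma cinner_scale_left: "cinner n (\<lambda>a. c * f a) h = cnj c * cinner n f h"
  unfolding cinner_def by (simp add: sum_distrib_left ac_simps)

lemma cinner_scale_right: "cinner n h (\<lambda>a. c * f a) = c * cinner n h f"
  unfolding cinner_def by (simp add: sum_distrib_left ac_simps)

lemma cinner_uminus_left: "cinner n (\<lambda>a. - f a) h = - cinner n f h"
  unfolding cinner_def by (simp add: sum_negf)

lemma cinner_uminus_right: "cinner n f (\<lambda>a. - h a) = - cinner n f h"
  unfolding cinner_def by (simp add: sum_negf)

lemma cinner_zero_left[simp]: "cinner n (\<lambda>a. 0) h = 0"
  unfolding cinner_def by simp

lemma cinner_zero_right[simp]: "cinner n f (\<lambda>a. 0) = 0"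
  unfolding cinner_def by simp

lemma cinner_cong: "(\<And>a. a < n \<Longrightarrow> g a = h a) \<Longrightarrow> cinner n f g = cinner n f h"
  unfolding cinner_def by (intro sum.cong) auto

lemma cinner_self: "cinner n f f = of_real (\<Sum>a<n. (cmod (f a))\<^sup>2)"
  unfolding cinner_def of_real_sum
  by (intro sum.cong refl) (metis complex_norm_square mult.commute)

lemma cinner_commute: "cinner n g f = cnj (cinner n f g)"
  unfolding cinner_def by (simp add: cnj_sum ac_simps)

lemma cinner_delta_left:
  "i < n \<Longrightarrow> cinner n (\<lambda>l. if l = i then 1 else 0) h = h i"
  unfolding cinner_def by (simp add: if_distrib if_distribR cong: if_cong)

lemma mat_app_add: "mat_app n P (\<lambda>b. f b + g b) = (\<lambda>a. mat_app n P f a + mat_app n P g a)"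
  unfolding mat_app_def by (simp add: ring_distribs sum.distrib)

lemma mat_app_scale: "mat_app n P (\<lambda>b. c * f b) = (\<lambda>a. c * mat_app n P f a)"
  unfolding mat_app_def by (simp add: sum_distrib_left ac_simps)

lemma mat_app_uminus: "mat_app n P (\<lambda>b. - g b) = (\<lambda>a. - mat_app n P g a)"
  unfolding mat_app_def by (simp add: sum_negf)

lemma mat_app_zero[simp]: "mat_app n P (\<lambda>b. 0) = (\<lambda>a. 0)"
  unfolding mat_app_def by simp

lemma mat_app_delta: "b < n \<Longrightarrow> mat_app n P (\<lambda>l. if l = b then 1 else 0) a = P $$ (a, b)"
  unfolding mat_app_def by (simp add: if_distrib cong: if_cong)

lemma mat_app_one: "a < n \<Longrightarrow> mat_app n (1\<^sub>m n) g a = g a"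
  unfolding mat_app_def by (simp add: if_distrib if_distribR cong: if_cong)

lemma mat_app_mult:
  assumes "A \<in> carrier_mat n n" "B \<in> carrier_mat n n" "a < n"
  shows "mat_app n (A * B) g a = mat_app n A (mat_app n B g) a"
proof -
  have "mat_app n (A * B) g a = (\<Sum>b<n. \<Sum>l<n. A $$ (a, l) * B $$ (l, b) * g b)"
    unfolding mat_app_def using assms by (simp add: scalar_prod_def lessThan_atLeast0 sum_distrib_right)
  also have "\<dots> = mat_app n A (mat_app n B g) a"
    unfolding mat_app_def by (subst sum.swap) (simp add: sum_distrib_left ac_simps)
  finally show ?thesis .
qed

lemma mat_app_minus:
  assumes "A \<in> carrier_mat n n" "B \<in> carrier_mat n n" "a < n"
  shows "mat_app n (A - B) g a = mat_app n A g a - mat_app n B g a"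
  unfolding mat_app_def using assms by (simp add: sum_subtractf left_diff_distrib)

lemma cinner_mat_app_minus:
  assumes "A \<in> carrier_mat n n" "B \<in> carrier_mat n n"
  shows "cinner n f (mat_app n (A - B) g) = cinner n f (mat_app n A g) - cinner n f (mat_app n B g)"
proof -
  have "cinner n f (mat_app n (A - B) g) = cinner n f (\<lambda>a. mat_app n A g a - mat_app n B g a)"
    by (rule cinner_cong) (simp add: mat_app_minus[OF assms])
  then show ?thesis
    by (simp add: cinner_def right_diff_distrib sum_subtractf)
qed

lemma mat_eq_iff_mat_app_eq:
  assumes "A \<in> carrier_mat n n" "B \<in> carrier_mat n n"
    and "\<And>g a. a < n \<Longrightarrow> mat_app n A g a = mat_app n B g a"
  shows "A = B"
proof (rule eq_matI)
  fix i j assume "i < dim_row B" "j < dim_col B"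
  then show "A $$ (i, j) = B $$ (i, j)"
    using assms mat_app_delta[of j n A i] mat_app_delta[of j n B i] by auto
qed (use assms in auto)

lemma cinner_mat_adjoint:
  assumes "B \<in> carrier_mat n n"
  shows "cinner n f (mat_app n (mat_adjoint B) h) = cinner n (mat_app n B f) h"
proof -
  have "cinner n f (mat_app n (mat_adjoint B) h) = (\<Sum>a<n. \<Sum>b<n. cnj (f a) * cnj (B $$ (b, a)) * h b)"
    unfolding cinner_def mat_app_def using assms by (simp add: sum_distrib_left ac_simps)
  also have "\<dots> = cinner n (mat_app n B f) h"
    unfolding cinner_def mat_app_def
    by (subst sum.swap) (simp add: cnj_sum sum_distrib_left sum_distrib_right ac_simps)
  finally show ?thesis .
qed

lemma quadratic_form_cinner:
  "P \<in> carrier_mat m m \<Longrightarrow> v \<in> carrier_vec m \<Longrightarrow>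
   conjugate v \<bullet> (P *\<^sub>v v) = cinner m (\<lambda>i. v $ i) (mat_app m P (\<lambda>i. v $ i))"
  unfolding cinner_def mat_app_def scalar_prod_def mult_mat_vec_def row_def
  by (auto simp: lessThan_atLeast0 intro!: sum.cong)

section \<open>Positive semidefinite matrices\<close>

lemma psd_mat_carrier: "psd_mat n P \<Longrightarrow> P \<in> carrier_mat n n"
  unfolding psd_mat_def by auto

lemma psd_mat_form:
  assumes "psd_mat m P"
  shows "cinner m f (mat_app m P f) \<in> \<real>" "0 \<le> Re (cinner m f (mat_app m P f))"
proof -
  have "conjugate (vec m f) \<bullet> (P *\<^sub>v vec m f) = cinner m f (mat_app m P f)"
    unfolding quadratic_form_cinner[OF psd_mat_carrier[OF assms] vec_carrier]
    unfolding cinner_def mat_app_def by (auto intro!: sum.cong)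
  then show "cinner m f (mat_app m P f) \<in> \<real>" "0 \<le> Re (cinner m f (mat_app m P f))"
    using assms unfolding psd_mat_def by (metis vec_carrier)+
qed

lemma psd_mat_hermitian:
  assumes psd: "psd_mat m P" and i: "i < m" and j: "j < m"
  shows "P $$ (i, j) = cnj (P $$ (j, i))"
proof -
  define di where "di = (\<lambda>l::nat. if l = i then (1::complex) else 0)"
  define dj where "dj = (\<lambda>l::nat. if l = j then (1::complex) else 0)"
  have form: "cinner m (\<lambda>l. a * di l + b * dj l) (mat_app m P (\<lambda>l. a * di l + b * dj l)) =
     cnj a * a * P $$ (i, i) + cnj a * b * P $$ (i, j) + cnj b * a * P $$ (j, i) + cnj b * b * P $$ (j, j)"
    for a b
    using i j unfolding di_def dj_def
    by (simp add: mat_app_add mat_app_scale cinner_add_left cinner_add_right cinner_scale_left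
        cinner_scale_right cinner_delta_left mat_app_delta algebra_simps)
  have "P $$ (i, i) \<in> \<real>"
    using psd_mat_form(1)[OF psd, of "\<lambda>l. 1 * di l + 0 * dj l"] form[of 1 0] by simp
  moreover have "P $$ (j, j) \<in> \<real>"
    using psd_mat_form(1)[OF psd, of "\<lambda>l. 0 * di l + 1 * dj l"] form[of 0 1] by simp
  moreover have "P $$ (i, i) + P $$ (i, j) + P $$ (j, i) + P $$ (j, j) \<in> \<real>"
    using psd_mat_form(1)[OF psd, of "\<lambda>l. 1 * di l + 1 * dj l"] form[of 1 1] by simp
  moreover have "P $$ (i, i) + \<i> * P $$ (i, j) - \<i> * P $$ (j, i) + P $$ (j, j) \<in> \<real>"
    using psd_mat_form(1)[OF psd, of "\<lambda>l. 1 * di l + \<i> * dj l"] form[of 1 \<i>] by simp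
  ultimately show ?thesis
    by (auto simp: complex_eq_iff complex_is_Real_iff)
qed

lemma psd_mat_form_conj_sym:
  assumes "psd_mat m P"
  shows "cinner m f (mat_app m P g) = cnj (cinner m g (mat_app m P f))"
proof -
  have herm: "cnj (P $$ (i, j)) = P $$ (j, i)" if "i < m" "j < m" for i j
    using psd_mat_hermitian[OF assms that(2,1)] by simp
  have "cnj (cinner m g (mat_app m P f)) = (\<Sum>j<m. \<Sum>i<m. g i * cnj (P $$ (i, j)) * cnj (f j))"
    unfolding cinner_def mat_app_def
    by (subst sum.swap) (simp add: cnj_sum sum_distrib_left ac_simps)
  also have "\<dots> = cinner m f (mat_app m P g)"
    unfolding cinner_def mat_app_def
    by (simp add: sum_distrib_left herm ac_simps)
  finally show ?thesis by simp
qed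

lemma quadratic_nonneg_imp_linear_coeff_zero:
  fixes a b :: real
  assumes "\<And>t. 0 \<le> 2 * t * a + t * t * b"
  shows "a = 0"
proof (rule ccontr)
  assume "a \<noteq> 0"
  define c where "c = \<bar>b\<bar> + 1"
  define t where "t = - a / c"
  have c: "c > 0"
    unfolding c_def by simp
  have "2 * t * a + t * t * b \<le> 2 * t * a + t * t * c"
    unfolding c_def by (intro add_left_mono mult_left_mono) auto
  also have "\<dots> = - a\<^sup>2 / c"
    using c unfolding t_def by (simp add: field_simps power2_eq_square)
  also have "\<dots> < 0"
    using \<open>a \<noteq> 0\<close> c by simp
  finally show False
    using assms[of t] by simp
qed

lemma psd_mat_null_vector:
  assumes psd: "psd_mat m P" and null: "cinner m f (mat_app m P f) = 0" and i: "i < m"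
  shows "mat_app m P f i = 0"
proof -
  define g where "g = mat_app m P f"
  have "0 \<le> 2 * t * Re (cinner m g g) + t * t * Re (cinner m g (mat_app m P g))" for t
  proof -
    have "0 \<le> Re (cinner m (\<lambda>l. f l + of_real t * g l) (mat_app m P (\<lambda>l. f l + of_real t * g l)))"
      by (rule psd_mat_form(2)[OF psd])
    also have "cinner m (\<lambda>l. f l + of_real t * g l) (mat_app m P (\<lambda>l. f l + of_real t * g l)) =
      of_real t * cinner m f (mat_app m P g) + of_real t * cinner m g g
        + of_real t * of_real t * cinner m g (mat_app m P g)"
      using null unfolding g_def
      by (simp add: mat_app_add mat_app_scale cinner_add_left cinner_add_right cinner_scale_left
          cinner_scale_right algebra_simps)
    finally show ?thesis
      unfolding psd_mat_form_conj_sym[OF psd, of f g] g_def[symmetric] cinner_commute[of m g g, symmetric]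
      by (simp add: algebra_simps)
  qed
  then have "Re (cinner m g g) = 0"
    by (rule quadratic_nonneg_imp_linear_coeff_zero)
  then have "(\<Sum>a<m. (cmod (g a))\<^sup>2) = 0"
    unfolding cinner_self by simp
  with i show ?thesis
    unfolding g_def by (subst (asm) sum_nonneg_eq_0_iff) auto
qed

lemma psd_mat_diag:
  assumes "psd_mat n P" "i < n"
  shows "P $$ (i, i) \<in> \<real>" "0 \<le> Re (P $$ (i, i))"
  using psd_mat_form[OF assms(1), of "\<lambda>l. if l = i then 1 else 0"] assms(2)
  by (simp_all add: cinner_delta_left mat_app_delta)

lemma psd_mat_trace_nonneg:
  assumes "psd_mat n P"
  shows "0 \<le> Re (mat_trace P)"
proof -
  have "dim_row P = n"
    using psd_mat_carrier[OF assms] by auto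
  then show ?thesis
    unfolding mat_trace_def Re_sum using psd_mat_diag(2)[OF assms] by (auto intro: sum_nonneg)
qed

lemma psd_mat_eq_zero_if_trace_nonpos:
  assumes psd: "psd_mat n P" and tr: "Re (mat_trace P) \<le> 0"
  shows "P = 0\<^sub>m n n"
proof -
  have P: "P \<in> carrier_mat n n"
    by (rule psd_mat_carrier[OF psd])
  have "(\<Sum>j<n. Re (P $$ (j, j))) = 0"
    using tr psd_mat_trace_nonneg[OF psd] P unfolding mat_trace_def Re_sum by simp
  then have "Re (P $$ (i, i)) = 0" if "i < n" for i
    using psd_mat_diag(2)[OF psd] that by (subst (asm) sum_nonneg_eq_0_iff) auto
  then have diag: "P $$ (i, i) = 0" if "i < n" for i
    using psd_mat_diag(1)[OF psd that] that by (simp add: complex_eq_iff complex_is_Real_iff)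
  show ?thesis
  proof (rule eq_matI)
    fix l i assume "l < dim_row (0\<^sub>m n n :: complex mat)" "i < dim_col (0\<^sub>m n n :: complex mat)"
    then have l: "l < n" and i: "i < n" by auto
    have "cinner n (\<lambda>l. if l = i then 1 else 0) (mat_app n P (\<lambda>l. if l = i then 1 else 0)) = 0"
      using diag[OF i] i by (simp add: cinner_delta_left mat_app_delta)
    from psd_mat_null_vector[OF psd this l] show "P $$ (l, i) = 0\<^sub>m n n $$ (l, i)"
      using l i by (simp add: mat_app_delta)
  qed (use P in auto)
qed

lemma gram_psd_mat:
  fixes a :: "nat \<Rightarrow> nat \<Rightarrow> complex"
  shows "psd_mat m (mat m m (\<lambda>(r, c). \<Sum>l<p. cnj (a l r) * a l c))"
  unfolding psd_mat_def
proof (intro conjI ballI)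
  fix v :: "complex vec" assume v: "v \<in> carrier_vec m"
  define G where "G = mat m m (\<lambda>(r, c). \<Sum>l<p. cnj (a l r) * a l c)"
  define h where "h = (\<lambda>l. \<Sum>c<m. a l c * v $ c)"
  have G: "G \<in> carrier_mat m m"
    unfolding G_def by simp
  have "mat_app m G (\<lambda>i. v $ i) r = (\<Sum>l<p. cnj (a l r) * h l)" if "r < m" for r
    unfolding mat_app_def G_def h_def using that
    by (simp add: sum_distrib_left sum_distrib_right mult.assoc) (rule sum.swap)
  then have "conjugate v \<bullet> (G *\<^sub>v v) = cinner m (\<lambda>i. v $ i) (\<lambda>r. \<Sum>l<p. cnj (a l r) * h l)"
    unfolding quadratic_form_cinner[OF G v] by (intro cinner_cong) simp
  also have "\<dots> = cinner p h h"
    unfolding cinner_def h_def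
    by (simp add: cnj_sum sum_distrib_left sum_distrib_right mult.assoc mult.left_commute)
      (subst sum.swap, intro sum.cong refl sum.swap)
  finally have form: "conjugate v \<bullet> (G *\<^sub>v v) = of_real (\<Sum>l<p. (cmod (h l))\<^sup>2)"
    unfolding cinner_self .
  show "conjugate v \<bullet> (G *\<^sub>v v) \<in> \<real>" "0 \<le> Re (conjugate v \<bullet> (G *\<^sub>v v))"
    unfolding form by (simp_all add: sum_nonneg)
qed simp

section \<open>Block matrices and complete positivity\<close>

definition block_mat :: "nat \<Rightarrow> nat \<Rightarrow> (nat \<Rightarrow> nat \<Rightarrow> complex mat) \<Rightarrow> complex mat" where
  "block_mat k n Q = mat (k * n) (k * n) (\<lambda>(r, c). Q (r div n) (c div n) $$ (r mod n, c mod n))"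

lemma sum_lessThan_mult_blocks: "(\<Sum>c<k * (n::nat). F c) = (\<Sum>j<k. \<Sum>b<n. F (j * n + b))"
proof -
  have "(\<Sum>c<k * n. F c) = (\<Sum>j<k. sum F {j * n..<j * n + n})"
    by (rule sum.nat_group[symmetric])
  also have "\<dots> = (\<Sum>j<k. \<Sum>b<n. F (j * n + b))"
  proof (rule sum.cong[OF refl])
    fix j
    have "sum F {0 + j * n..<n + j * n} = (\<Sum>b = 0..<n. F (b + j * n))"
      by (rule sum.shift_bounds_nat_ivl)
    then show "sum F {j * n..<j * n + n} = (\<Sum>b<n. F (j * n + b))"
      by (simp add: add.commute lessThan_atLeast0)
  qed
  finally show ?thesis .
qed

lemma block_index_less: "i < k \<Longrightarrow> a < n \<Longrightarrow> i * n + a < k * (n::nat)"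
proof -
  assume "i < k" "a < n"
  then have "Suc i * n \<le> k * n"
    by (intro mult_le_mono1) simp
  with \<open>a < n\<close> show ?thesis
    by simp
qed

lemma index_block_mat[simp]:
  "i < k \<Longrightarrow> j < k \<Longrightarrow> a < n \<Longrightarrow> b < n \<Longrightarrow>
   block_mat k n Q $$ (i * n + a, j * n + b) = Q i j $$ (a, b)"
  unfolding block_mat_def by (simp add: block_index_less)

lemma dim_block_mat[simp]: "dim_row (block_mat k n Q) = k * n" "dim_col (block_mat k n Q) = k * n"
  unfolding block_mat_def by simp_all

lemma ampliation_block_mat:
  assumes Q: "\<And>i j. i < k \<Longrightarrow> j < k \<Longrightarrow> Q i j \<in> carrier_mat n n"
  shows "ampliation k n \<Phi> (block_mat k n Q) = block_mat k n (\<lambda>i j. \<Phi> (Q i j))"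
proof -
  have "mat_block n (block_mat k n Q) i j = Q i j" if "i < k" "j < k" for i j
    using Q[OF that] that by (intro eq_matI) (auto simp: mat_block_def)
  then show ?thesis
    unfolding ampliation_def block_mat_def[of k n "\<lambda>i j. \<Phi> (Q i j)"]
    by (intro eq_matI) (auto simp: less_mult_imp_div_less)
qed

lemma mat_app_block_mat:
  assumes "i < k" "a < n"
  shows "mat_app (k * n) (block_mat k n Q) (\<lambda>r. f (r div n) (r mod n)) (i * n + a) =
    (\<Sum>j<k. mat_app n (Q i j) (f j) a)"
  unfolding mat_app_def sum_lessThan_mult_blocks[of _ k n]
  using assms by (intro sum.cong refl) auto

lemma cinner_block_mat:
  "cinner (k * n) (\<lambda>r. f (r div n) (r mod n))
     (mat_app (k * n) (block_mat k n Q) (\<lambda>r. g (r div n) (r mod n))) =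
   (\<Sum>i<k. \<Sum>j<k. cinner n (f i) (mat_app n (Q i j) (g j)))"
  unfolding cinner_def sum_lessThan_mult_blocks[of _ k n]
  by (simp add: mat_app_block_mat sum_distrib_left cinner_def) (subst sum.swap, simp)

lemma gram_block_mat_psd:
  assumes A: "\<And>i. i < k \<Longrightarrow> A i \<in> carrier_mat n n"
  shows "psd_mat (k * n) (block_mat k n (\<lambda>i j. mat_adjoint (A i) * A j))"
proof -
  have "block_mat k n (\<lambda>i j. mat_adjoint (A i) * A j) =
    mat (k * n) (k * n) (\<lambda>(r, c). \<Sum>l<n. cnj (A (r div n) $$ (l, r mod n)) * A (c div n) $$ (l, c mod n))"
    (is "_ = ?G")
  proof (rule eq_matI)
    fix r c assume "r < dim_row ?G" "c < dim_col ?G"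
    then have rc: "r < k * n" "c < k * n"
      by auto
    then have "n > 0"
      by (cases n) auto
    with rc have "r div n < k" "c div n < k" "r mod n < n" "c mod n < n"
      by (auto simp: less_mult_imp_div_less)
    with rc show "block_mat k n (\<lambda>i j. mat_adjoint (A i) * A j) $$ (r, c) = ?G $$ (r, c)"
      unfolding block_mat_def by (simp add: index_mat_adjoint_mult[OF A A])
  qed auto
  then show ?thesis
    using gram_psd_mat by simp
qed

lemma completely_positive_block_psd:
  assumes cp: "completely_positive n \<Phi>" and k: "k \<ge> 1"
    and A: "\<And>i. i < k \<Longrightarrow> A i \<in> carrier_mat n n"
  shows "psd_mat (k * n) (block_mat k n (\<lambda>i j. \<Phi> (mat_adjoint (A i) * A j)))"
proof -
  have "psd_mat (k * n) (block_mat k n (\<lambda>i j. mat_adjoint (A i) * A j))"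
    using A by (rule gram_block_mat_psd)
  then have "psd_mat (k * n) (ampliation k n \<Phi> (block_mat k n (\<lambda>i j. mat_adjoint (A i) * A j)))"
    using cp k unfolding completely_positive_def by blast
  moreover have "ampliation k n \<Phi> (block_mat k n (\<lambda>i j. mat_adjoint (A i) * A j)) =
    block_mat k n (\<lambda>i j. \<Phi> (mat_adjoint (A i) * A j))"
    by (rule ampliation_block_mat) (metis A mat_adjoint_carrier mult_carrier_mat)
  ultimately show ?thesis
    by simp
qed

section \<open>The Schwarz inequality and the multiplicative domain\<close>

lemma linear_map_mat_carrier: "linear_map_mat n \<Phi> \<Longrightarrow> A \<in> carrier_mat n n \<Longrightarrow> \<Phi> A \<in> carrier_mat n n"
  unfolding linear_map_mat_def by auto

lemma completely_positive_mat_adjoint: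
  assumes lin: "linear_map_mat n \<Phi>" and cp: "completely_positive n \<Phi>"
    and W: "W \<in> carrier_mat n n"
  shows "\<Phi> (mat_adjoint W) = mat_adjoint (\<Phi> W)"
proof -
  let ?A = "(!) [1\<^sub>m n, W]"
  let ?B = "block_mat 2 n (\<lambda>i j. \<Phi> (mat_adjoint (?A i) * ?A j))"
  have psd: "psd_mat (2 * n) ?B"
    by (rule completely_positive_block_psd[OF cp]) (use W in \<open>auto simp: less_2_cases_iff\<close>)
  have "\<Phi> W $$ (a, b) = cnj (\<Phi> (mat_adjoint W) $$ (b, a))" if "a < n" "b < n" for a b
  proof -
    have "?B $$ (0 * n + a, 1 * n + b) = cnj (?B $$ (1 * n + b, 0 * n + a))"
      by (rule psd_mat_hermitian[OF psd]) (use that in auto)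
    then show ?thesis
      by (subst (asm) (1 2) index_block_mat) (use that W in auto)
  qed
  moreover have PW: "\<Phi> W \<in> carrier_mat n n" "\<Phi> (mat_adjoint W) \<in> carrier_mat n n"
    using linear_map_mat_carrier[OF lin W] linear_map_mat_carrier[OF lin mat_adjoint_carrier[OF W]] .
  ultimately show ?thesis
    by (intro eq_matI) auto
qed

lemma cinner_mat_adjoint_mult:
  "B \<in> carrier_mat n n \<Longrightarrow>
   cinner n g (mat_app n (mat_adjoint B * B) g) = cinner n (mat_app n B g) (mat_app n B g)"
  by (simp add: cinner_cong[OF mat_app_mult] cinner_mat_adjoint)

text \<open>\<^term>\<open>schwarz_mat \<Phi> n Z W\<close> is the \<open>\<Phi>\<close>-image of the Gram matrix of \<open>(1, Z, W\<^sup>*)\<close>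
  and \<^term>\<open>schwarz_vec \<Phi> n Z g\<close> is the block vector \<open>(- \<Phi>(Z) g, g, 0)\<close>.\<close>

definition schwarz_mat ::
  "(complex mat \<Rightarrow> complex mat) \<Rightarrow> nat \<Rightarrow> complex mat \<Rightarrow> complex mat \<Rightarrow> complex mat" where
  "schwarz_mat \<Phi> n Z W = block_mat 3 n
     (\<lambda>i j. \<Phi> (mat_adjoint ([1\<^sub>m n, Z, mat_adjoint W] ! i) * [1\<^sub>m n, Z, mat_adjoint W] ! j))"

definition schwarz_vec ::
  "(complex mat \<Rightarrow> complex mat) \<Rightarrow> nat \<Rightarrow> complex mat \<Rightarrow> (nat \<Rightarrow> complex) \<Rightarrow> nat \<Rightarrow> complex" where
  "schwarz_vec \<Phi> n Z g = (\<lambda>r. ([\<lambda>a. - mat_app n (\<Phi> Z) g a, g, \<lambda>a. 0] ! (r div n)) (r mod n))"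

lemma schwarz_mat_psd:
  assumes "completely_positive n \<Phi>" "Z \<in> carrier_mat n n" "W \<in> carrier_mat n n"
  shows "psd_mat (3 * n) (schwarz_mat \<Phi> n Z W)"
  unfolding schwarz_mat_def
  by (rule completely_positive_block_psd) (use assms in \<open>auto simp: numeral_3_eq_3 less_Suc_eq\<close>)

lemma schwarz_mat_form:
  assumes lin: "linear_map_mat n \<Phi>" and cp: "completely_positive n \<Phi>" and un: "unital n \<Phi>"
    and Z: "Z \<in> carrier_mat n n"
  shows "cinner (3 * n) (schwarz_vec \<Phi> n Z g) (mat_app (3 * n) (schwarz_mat \<Phi> n Z W) (schwarz_vec \<Phi> n Z g)) =
    cinner n g (mat_app n (\<Phi> (mat_adjoint Z * Z)) g) - cinner n (mat_app n (\<Phi> Z) g) (mat_app n (\<Phi> Z) g)"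
proof -
  let ?u = "mat_app n (\<Phi> Z) g"
  have PZ: "\<Phi> Z \<in> carrier_mat n n"
    by (rule linear_map_mat_carrier[OF lin Z])
  have one: "\<Phi> (1\<^sub>m n) = 1\<^sub>m n"
    using un unfolding unital_def .
  have "cinner n ?u (mat_app n (1\<^sub>m n) ?u) = cinner n ?u ?u"
    by (intro cinner_cong) (simp add: mat_app_one)
  moreover have "cinner n g (mat_app n (mat_adjoint (\<Phi> Z)) ?u) = cinner n ?u ?u"
    by (rule cinner_mat_adjoint[OF PZ])
  ultimately show ?thesis
    unfolding schwarz_mat_def schwarz_vec_def cinner_block_mat
    using Z by (simp add: numeral_3_eq_3 one completely_positive_mat_adjoint[OF lin cp Z]
        mat_app_uminus cinner_uminus_left cinner_uminus_right)
qed

lemma schwarz_mat_row: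
  assumes "W \<in> carrier_mat n n" "a < n"
  shows "mat_app (3 * n) (schwarz_mat \<Phi> n Z W) (schwarz_vec \<Phi> n Z g) (2 * n + a) =
    mat_app n (\<Phi> (W * Z)) g a - mat_app n (\<Phi> W) (mat_app n (\<Phi> Z) g) a"
  using assms mat_app_block_mat[of 2 3 a n]
  unfolding schwarz_mat_def schwarz_vec_def by (simp add: numeral_3_eq_3 mat_app_uminus mult.commute)

theorem kadison_schwarz:
  assumes lin: "linear_map_mat n \<Phi>" and cp: "completely_positive n \<Phi>" and un: "unital n \<Phi>"
    and Z: "Z \<in> carrier_mat n n"
  shows "psd_mat n (\<Phi> (mat_adjoint Z * Z) - mat_adjoint (\<Phi> Z) * \<Phi> Z)"
    (is "psd_mat n ?D")
  unfolding psd_mat_def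
proof (intro conjI ballI)
  have PZ: "\<Phi> Z \<in> carrier_mat n n"
    by (rule linear_map_mat_carrier[OF lin Z])
  have PZZ: "\<Phi> (mat_adjoint Z * Z) \<in> carrier_mat n n"
    by (rule linear_map_mat_carrier[OF lin mult_carrier_mat[OF mat_adjoint_carrier[OF Z] Z]])
  show D: "?D \<in> carrier_mat n n"
    using PZ by (intro minus_carrier_mat mult_carrier_mat[OF mat_adjoint_carrier[OF PZ] PZ])
  fix v :: "complex vec" assume v: "v \<in> carrier_vec n"
  let ?g = "\<lambda>i. v $ i"
  have "conjugate v \<bullet> (?D *\<^sub>v v) =
    cinner n ?g (mat_app n (\<Phi> (mat_adjoint Z * Z)) ?g) - cinner n (mat_app n (\<Phi> Z) ?g) (mat_app n (\<Phi> Z) ?g)"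
    unfolding quadratic_form_cinner[OF D v] cinner_mat_adjoint_mult[OF PZ, symmetric]
    by (rule cinner_mat_app_minus[OF PZZ mult_carrier_mat[OF mat_adjoint_carrier[OF PZ] PZ]])
  also have "\<dots> \<in> \<real> \<and> 0 \<le> Re \<dots>"
    using psd_mat_form[OF schwarz_mat_psd[OF cp Z Z], of "schwarz_vec \<Phi> n Z ?g"]
    unfolding schwarz_mat_form[OF lin cp un Z] by blast
  finally show "conjugate v \<bullet> (?D *\<^sub>v v) \<in> \<real>" "0 \<le> Re (conjugate v \<bullet> (?D *\<^sub>v v))"
    by blast+
qed

theorem multiplicative_domain_right:
  assumes lin: "linear_map_mat n \<Phi>" and cp: "completely_positive n \<Phi>" and un: "unital n \<Phi>"
    and Z: "Z \<in> carrier_mat n n" and eq: "\<Phi> (mat_adjoint Z * Z) = mat_adjoint (\<Phi> Z) * \<Phi> Z"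
    and W: "W \<in> carrier_mat n n"
  shows "\<Phi> (W * Z) = \<Phi> W * \<Phi> Z"
proof (rule mat_eq_iff_mat_app_eq)
  have PZ: "\<Phi> Z \<in> carrier_mat n n" and PW: "\<Phi> W \<in> carrier_mat n n"
    using linear_map_mat_carrier[OF lin Z] linear_map_mat_carrier[OF lin W] .
  show "\<Phi> (W * Z) \<in> carrier_mat n n"
    by (rule linear_map_mat_carrier[OF lin mult_carrier_mat[OF W Z]])
  show "\<Phi> W * \<Phi> Z \<in> carrier_mat n n"
    using PW PZ by (rule mult_carrier_mat)
  fix g a assume a: "a < n"
  have "cinner n g (mat_app n (\<Phi> (mat_adjoint Z * Z)) g) = cinner n (mat_app n (\<Phi> Z) g) (mat_app n (\<Phi> Z) g)"
    unfolding eq by (rule cinner_mat_adjoint_mult[OF PZ])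
  then have "cinner (3 * n) (schwarz_vec \<Phi> n Z g)
      (mat_app (3 * n) (schwarz_mat \<Phi> n Z W) (schwarz_vec \<Phi> n Z g)) = 0"
    unfolding schwarz_mat_form[OF lin cp un Z] by simp
  from psd_mat_null_vector[OF schwarz_mat_psd[OF cp Z W] this, of "2 * n + a"]
  have "mat_app n (\<Phi> (W * Z)) g a = mat_app n (\<Phi> W) (mat_app n (\<Phi> Z) g) a"
    using a unfolding schwarz_mat_row[OF W a] by simp
  then show "mat_app n (\<Phi> (W * Z)) g a = mat_app n (\<Phi> W * \<Phi> Z) g a"
    using mat_app_mult[OF PW PZ a] by simp
qed

lemma multiplicative_domain_left:
  assumes lin: "linear_map_mat n \<Phi>" and cp: "completely_positive n \<Phi>" and un: "unital n \<Phi>"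
    and Z: "Z \<in> carrier_mat n n" and eq: "\<Phi> (Z * mat_adjoint Z) = \<Phi> Z * mat_adjoint (\<Phi> Z)"
    and W: "W \<in> carrier_mat n n"
  shows "\<Phi> (Z * W) = \<Phi> Z * \<Phi> W"
proof -
  have PZ: "\<Phi> Z \<in> carrier_mat n n" and PW: "\<Phi> W \<in> carrier_mat n n"
    using linear_map_mat_carrier[OF lin Z] linear_map_mat_carrier[OF lin W] .
  have eq': "\<Phi> (mat_adjoint (mat_adjoint Z) * mat_adjoint Z) =
    mat_adjoint (\<Phi> (mat_adjoint Z)) * \<Phi> (mat_adjoint Z)"
    using eq by (simp add: completely_positive_mat_adjoint[OF lin cp Z])
  have "mat_adjoint (\<Phi> (Z * W)) = \<Phi> (mat_adjoint W * mat_adjoint Z)"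
    using Z W by (simp add: completely_positive_mat_adjoint[OF lin cp, of "Z * W", symmetric] mat_adjoint_mult)
  also have "\<dots> = \<Phi> (mat_adjoint W) * \<Phi> (mat_adjoint Z)"
    by (rule multiplicative_domain_right[OF lin cp un mat_adjoint_carrier[OF Z] eq' mat_adjoint_carrier[OF W]])
  also have "\<dots> = mat_adjoint (\<Phi> Z * \<Phi> W)"
    by (simp add: completely_positive_mat_adjoint[OF lin cp] Z W mat_adjoint_mult[OF PZ PW])
  finally show ?thesis
    by (metis mat_adjoint_adjoint)
qed

lemma mat_trace_minus:
  "A \<in> carrier_mat n n \<Longrightarrow> B \<in> carrier_mat n n \<Longrightarrow> mat_trace (A - B) = mat_trace A - mat_trace B"
  unfolding mat_trace_def by (simp add: sum_subtractf)

lemma schwarz_equality_if_inverse_channels: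
  assumes lin1: "linear_map_mat n \<Phi>1" and cp1: "completely_positive n \<Phi>1"
    and tp1: "trace_preserving n \<Phi>1" and un1: "unital n \<Phi>1"
    and lin2: "linear_map_mat n \<Phi>2" and cp2: "completely_positive n \<Phi>2"
    and tp2: "trace_preserving n \<Phi>2" and un2: "unital n \<Phi>2"
    and Z: "Z \<in> carrier_mat n n" and Z': "Z' \<in> carrier_mat n n"
    and ZZ': "\<Phi>1 Z = Z'" and Z'Z: "\<Phi>2 Z' = Z"
  shows "\<Phi>1 (mat_adjoint Z * Z) = mat_adjoint Z' * Z'"
proof -
  let ?S = "mat_adjoint Z * Z" and ?S' = "mat_adjoint Z' * Z'"
  have S: "?S \<in> carrier_mat n n" and S': "?S' \<in> carrier_mat n n"
    using Z Z' by auto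
  have PS: "\<Phi>1 ?S \<in> carrier_mat n n" and PS': "\<Phi>2 ?S' \<in> carrier_mat n n"
    using linear_map_mat_carrier[OF lin1 S] linear_map_mat_carrier[OF lin2 S'] .
  have psd1: "psd_mat n (\<Phi>1 ?S - ?S')"
    using kadison_schwarz[OF lin1 cp1 un1 Z] ZZ' by simp
  have psd2: "psd_mat n (\<Phi>2 ?S' - ?S)"
    using kadison_schwarz[OF lin2 cp2 un2 Z'] Z'Z by simp
  have "mat_trace (\<Phi>1 ?S - ?S') = - mat_trace (\<Phi>2 ?S' - ?S)"
    using tp1 tp2 S S' unfolding mat_trace_minus[OF PS S'] mat_trace_minus[OF PS' S] trace_preserving_def
    by simp
  then have "Re (mat_trace (\<Phi>1 ?S - ?S')) \<le> 0"
    using psd_mat_trace_nonneg[OF psd2] by simp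
  then have zero: "\<Phi>1 ?S - ?S' = 0\<^sub>m n n"
    by (rule psd_mat_eq_zero_if_trace_nonpos[OF psd1])
  show ?thesis
  proof (rule eq_matI)
    fix i j assume "i < dim_row ?S'" "j < dim_col ?S'"
    then have "(\<Phi>1 ?S - ?S') $$ (i, j) = \<Phi>1 ?S $$ (i, j) - ?S' $$ (i, j)"
      by (rule index_minus_mat)
    with \<open>i < dim_row ?S'\<close> \<open>j < dim_col ?S'\<close> show "\<Phi>1 ?S $$ (i, j) = ?S' $$ (i, j)"
      using zero Z' by simp
  qed (use PS S' in auto)
qed

section \<open>Cospectrality from traces of powers\<close>

lemma sum_mset_eq_sum_count:
  fixes f :: "'a \<Rightarrow> 'b::comm_semiring_1"
  assumes "finite S" "set_mset A \<subseteq> S"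
  shows "(\<Sum>a\<in>#A. f a) = (\<Sum>x\<in>S. of_nat (count A x) * f x)"
  using assms(2)
proof (induction A)
  case empty
  then show ?case by simp
next
  case (add a A)
  then have a: "a \<in> S" and IH: "(\<Sum>a\<in>#A. f a) = (\<Sum>x\<in>S. of_nat (count A x) * f x)"
    by auto
  have "(\<Sum>x\<in>S. of_nat (count (add_mset a A) x) * f x) =
    (\<Sum>x\<in>S. of_nat (count A x) * f x + (if x = a then f x else 0))"
    by (intro sum.cong refl) (auto simp: algebra_simps)
  also have "\<dots> = (\<Sum>x\<in>S. of_nat (count A x) * f x) + f a"
    using a assms(1) by (simp add: sum.distrib)
  finally show ?case
    using IH by (simp add: add.commute)
qed

text \<open>Power sums determine a finite multiset of complex numbers: test the difference of the
  multiplicity functions against the polynomial vanishing on all points but one.\<close>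

lemma multiset_eq_if_power_sums_eq:
  fixes A B :: "complex multiset"
  assumes sums: "\<And>k. (\<Sum>a\<in>#A. a ^ k) = (\<Sum>b\<in>#B. b ^ k)"
  shows "A = B"
proof -
  define S where "S = set_mset A \<union> set_mset B"
  have S: "finite S"
    unfolding S_def by simp
  define d where "d x = (of_nat (count A x) - of_nat (count B x) :: complex)" for x
  have power_sums: "(\<Sum>x\<in>S. d x * x ^ k) = 0" for k
    using sums[of k] sum_mset_eq_sum_count[OF S, of A "\<lambda>a. a ^ k"] sum_mset_eq_sum_count[OF S, of B "\<lambda>a. a ^ k"]
    unfolding d_def S_def by (simp add: left_diff_distrib sum_subtractf)
  have poly: "(\<Sum>x\<in>S. d x * poly q x) = 0" for q
  proof -
    have "(\<Sum>x\<in>S. d x * poly q x) = (\<Sum>x\<in>S. \<Sum>i\<le>degree q. coeff q i * (d x * x ^ i))"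
      unfolding poly_altdef by (simp add: sum_distrib_left ac_simps)
    also have "\<dots> = (\<Sum>i\<le>degree q. coeff q i * (\<Sum>x\<in>S. d x * x ^ i))"
      by (subst sum.swap) (simp add: sum_distrib_left)
    finally show ?thesis
      using power_sums by simp
  qed
  have d: "d c = 0" if c: "c \<in> S" for c
  proof -
    define q where "q = (\<Prod>y\<in>S - {c}. [:- y, 1:])"
    have q: "poly q x = (\<Prod>y\<in>S - {c}. x - y)" for x
      unfolding q_def poly_prod by simp
    have "(\<Sum>x\<in>S. d x * poly q x) = d c * poly q c + (\<Sum>x\<in>S - {c}. d x * poly q x)"
      using S c by (simp add: sum.remove)
    also have "(\<Sum>x\<in>S - {c}. d x * poly q x) = 0"
      unfolding q using S by (intro sum.neutral ballI) (auto simp: prod_zero_iff)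
    finally have "d c * poly q c = 0"
      using poly[of q] by simp
    moreover have "poly q c \<noteq> 0"
      unfolding q using S by (simp add: prod_zero_iff)
    ultimately show ?thesis
      by simp
  qed
  show ?thesis
  proof (rule multiset_eqI)
    fix x
    show "count A x = count B x"
    proof (cases "x \<in> S")
      case True
      then show ?thesis
        using d[OF True] unfolding d_def by simp
    next
      case False
      then show ?thesis
        unfolding S_def by (simp add: not_in_iff)
    qed
  qed
qed

lemma mat_trace_mult_comm:
  fixes A B :: "complex mat"
  assumes "A \<in> carrier_mat n n" "B \<in> carrier_mat n n"
  shows "mat_trace (A * B) = mat_trace (B * A)"
proof -
  have "mat_trace (A * B) = (\<Sum>i<n. \<Sum>l<n. A $$ (i, l) * B $$ (l, i))"
    unfolding mat_trace_def using assms by (simp add: scalar_prod_def lessThan_atLeast0)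
  also have "\<dots> = mat_trace (B * A)"
    unfolding mat_trace_def using assms
    by (subst sum.swap) (simp add: scalar_prod_def lessThan_atLeast0 ac_simps)
  finally show ?thesis .
qed

lemma mat_trace_similar:
  fixes A B :: "complex mat"
  assumes "similar_mat A B"
  shows "mat_trace A = mat_trace B"
proof -
  obtain P Q where wit: "similar_mat_wit A B P Q"
    using assms unfolding similar_mat_def by blast
  note sim = similar_mat_witD[OF refl wit]
  have "mat_trace A = mat_trace (Q * (P * B))"
    unfolding sim(3) using sim(5-7) by (intro mat_trace_mult_comm) auto
  also have "Q * (P * B) = B"
    using sim(2,5-7) by (simp add: assoc_mult_mat[symmetric])
  finally show ?thesis .
qed

lemma upper_triangular_mult:
  fixes U V :: "complex mat"
  assumes U: "U \<in> carrier_mat n n" and V: "V \<in> carrier_mat n n"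
    and uU: "upper_triangular U" and uV: "upper_triangular V"
  shows "upper_triangular (U * V)" "\<And>i. i < n \<Longrightarrow> (U * V) $$ (i, i) = U $$ (i, i) * V $$ (i, i)"
proof -
  have zU: "U $$ (i, l) = 0" if "i < n" "l < i" for i l
    using uU that U by (auto simp: upper_triangular_def)
  have zV: "V $$ (l, j) = 0" if "l < n" "j < l" for l j
    using uV that V by (auto simp: upper_triangular_def)
  have UV: "(U * V) $$ (i, j) = (\<Sum>l<n. U $$ (i, l) * V $$ (l, j))" if "i < n" "j < n" for i j
    using U V that by (simp add: scalar_prod_def lessThan_atLeast0)
  show "upper_triangular (U * V)"
  proof (rule upper_triangularI)
    fix i j assume "j < i" "i < dim_row (U * V)"
    then have i: "i < n" and j: "j < n"
      using U by auto
    show "(U * V) $$ (i, j) = 0"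
      unfolding UV[OF i j]
    proof (rule sum.neutral, intro ballI)
      fix l assume "l \<in> {..<n}"
      then show "U $$ (i, l) * V $$ (l, j) = 0"
        using zU[OF i, of l] zV[of l j] \<open>j < i\<close> by (cases "l < i") auto
    qed
  qed
  show "(U * V) $$ (i, i) = U $$ (i, i) * V $$ (i, i)" if i: "i < n" for i
  proof -
    have "(\<Sum>l<n. U $$ (i, l) * V $$ (l, i)) =
      U $$ (i, i) * V $$ (i, i) + (\<Sum>l\<in>{..<n} - {i}. U $$ (i, l) * V $$ (l, i))"
      using i by (subst sum.remove[of _ i]) auto
    also have "(\<Sum>l\<in>{..<n} - {i}. U $$ (i, l) * V $$ (l, i)) = 0"
    proof (rule sum.neutral, intro ballI)
      fix l assume "l \<in> {..<n} - {i}"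
      then show "U $$ (i, l) * V $$ (l, i) = 0"
        using zU[OF i, of l] zV[of l i] by (cases "l < i") auto
    qed
    finally show ?thesis
      unfolding UV[OF i i] by simp
  qed
qed

lemma upper_triangular_pow:
  fixes B :: "complex mat"
  assumes B: "B \<in> carrier_mat n n" and u: "upper_triangular B"
  shows "upper_triangular (B ^\<^sub>m k) \<and> (\<forall>i<n. (B ^\<^sub>m k) $$ (i, i) = B $$ (i, i) ^ k)"
proof (induction k)
  case 0
  then show ?case using B by auto
next
  case (Suc k)
  with upper_triangular_mult[OF pow_carrier_mat[OF B] B _ u] show ?case
    by simp
qed

lemma mat_trace_pow_eq_power_sum:
  fixes X :: "complex mat"
  assumes X: "X \<in> carrier_mat n n"
  obtains es where "char_poly X = (\<Prod>a\<leftarrow>es. [:- a, 1:])"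
    and "\<And>k. mat_trace (X ^\<^sub>m k) = (\<Sum>a\<in>#mset es. a ^ k)"
proof -
  obtain es0 where "char_poly X = (\<Prod>a\<leftarrow>es0. [:- a, 1:])"
    using char_poly_factorized[OF X] by blast
  from schur_upper_triangular[OF X this]
  obtain B where B: "B \<in> carrier_mat n n" and u: "upper_triangular B" and sim: "similar_mat X B"
    by blast
  have "mat_trace (X ^\<^sub>m k) = (\<Sum>a\<in>#mset (diag_mat B). a ^ k)" for k
  proof -
    have "similar_mat (X ^\<^sub>m k) (B ^\<^sub>m k)"
      using sim similar_mat_wit_pow unfolding similar_mat_def by blast
    then have "mat_trace (X ^\<^sub>m k) = mat_trace (B ^\<^sub>m k)"
      by (rule mat_trace_similar)
    also have "\<dots> = (\<Sum>i<n. B $$ (i, i) ^ k)"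
      unfolding mat_trace_def using upper_triangular_pow[OF B u, of k] B by simp
    also have "\<dots> = (\<Sum>a\<in>#mset (diag_mat B). a ^ k)"
      unfolding diag_mat_def using B
      by (simp add: lessThan_atLeast0 sum_unfold_sum_mset multiset.map_comp o_def)
    finally show ?thesis .
  qed
  moreover have "char_poly X = (\<Prod>a\<leftarrow>diag_mat B. [:- a, 1:])"
    using char_poly_similar[OF sim] char_poly_upper_triangular[OF B u] by simp
  ultimately show ?thesis
    using that by blast
qed

lemma char_poly_eq_if_trace_pow_eq:
  fixes X Y :: "complex mat"
  assumes X: "X \<in> carrier_mat n n" and Y: "Y \<in> carrier_mat n n"
    and tr: "\<And>k. mat_trace (X ^\<^sub>m k) = mat_trace (Y ^\<^sub>m k)"
  shows "char_poly X = char_poly Y"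
proof -
  obtain ds where ds: "char_poly X = (\<Prod>a\<leftarrow>ds. [:- a, 1:])"
    and trX: "\<And>k. mat_trace (X ^\<^sub>m k) = (\<Sum>a\<in>#mset ds. a ^ k)"
    using mat_trace_pow_eq_power_sum[OF X] by blast
  obtain es where es: "char_poly Y = (\<Prod>a\<leftarrow>es. [:- a, 1:])"
    and trY: "\<And>k. mat_trace (Y ^\<^sub>m k) = (\<Sum>a\<in>#mset es. a ^ k)"
    using mat_trace_pow_eq_power_sum[OF Y] by blast
  have "mset ds = mset es"
    by (rule multiset_eq_if_power_sums_eq) (use trX trY tr in metis)
  then show ?thesis
    unfolding ds es by (metis mset_map prod_mset_prod_list)
qed

lemma multiplicative_domain_pow:
  assumes un: "unital n \<Phi>" and X: "X \<in> carrier_mat n n" and Y: "Y \<in> carrier_mat n n"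
    and mult: "\<And>W. W \<in> carrier_mat n n \<Longrightarrow> \<Phi> (W * X) = \<Phi> W * Y"
  shows "\<Phi> (X ^\<^sub>m k) = Y ^\<^sub>m k"
proof (induction k)
  case 0
  then show ?case
    using un X Y unfolding unital_def by simp
next
  case (Suc k)
  then show ?case
    using mult[OF pow_carrier_mat[OF X]] by simp
qed

lemma cospectral_if_mult_right:
  assumes tp: "trace_preserving n \<Phi>" and un: "unital n \<Phi>"
    and X: "X \<in> carrier_mat n n" and Y: "Y \<in> carrier_mat n n"
    and mult: "\<And>W. W \<in> carrier_mat n n \<Longrightarrow> \<Phi> (W * X) = \<Phi> W * Y"
  shows "cospectral X Y"
  unfolding cospectral_def
proof (rule char_poly_eq_if_trace_pow_eq[OF X Y])
  fix k
  show "mat_trace (X ^\<^sub>m k) = mat_trace (Y ^\<^sub>m k)"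
    using tp pow_carrier_mat[OF X] multiplicative_domain_pow[OF un X Y mult]
    unfolding trace_preserving_def by metis
qed

section \<open>The adjoint with respect to the trace inner product\<close>

lemma mat_trace_adjoint_mult_unit:
  fixes C :: "complex mat"
  assumes C: "C \<in> carrier_mat n n" and i: "i < n" and j: "j < n"
  shows "mat_trace (mat_adjoint C * mat n n (\<lambda>(a, b). if a = i \<and> b = j then 1 else 0)) = cnj (C $$ (i, j))"
proof -
  have "mat_trace (mat_adjoint C * mat n n (\<lambda>(a, b). if a = i \<and> b = j then 1 else 0)) =
    (\<Sum>l<n. \<Sum>m<n. cnj (C $$ (m, l)) * (if m = i \<and> l = j then 1 else 0))"
    unfolding mat_trace_def using C by (simp add: scalar_prod_def lessThan_atLeast0)
  also have "\<dots> = (\<Sum>l<n. if l = j then cnj (C $$ (i, l)) else 0)"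
    using i by (intro sum.cong refl) (auto simp: if_distrib if_distribR cong: if_cong)
  also have "\<dots> = cnj (C $$ (i, j))"
    using j by simp
  finally show ?thesis .
qed

lemma hs_adjoint_eqI:
  assumes C: "C \<in> carrier_mat n n"
    and adj: "\<And>A. A \<in> carrier_mat n n \<Longrightarrow> mat_trace (mat_adjoint C * A) = mat_trace (mat_adjoint B * \<Phi> A)"
  shows "hs_adjoint n \<Phi> B = C"
  unfolding hs_adjoint_def
proof (rule the_equality)
  show "C \<in> carrier_mat n n \<and> (\<forall>A\<in>carrier_mat n n. mat_trace (mat_adjoint C * A) = mat_trace (mat_adjoint B * \<Phi> A))"
    using C adj by blast
  fix D assume "D \<in> carrier_mat n n \<and> (\<forall>A\<in>carrier_mat n n. mat_trace (mat_adjoint D * A) = mat_trace (mat_adjoint B * \<Phi> A))"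
  then have D: "D \<in> carrier_mat n n"
    and adjD: "\<And>A. A \<in> carrier_mat n n \<Longrightarrow> mat_trace (mat_adjoint D * A) = mat_trace (mat_adjoint B * \<Phi> A)"
    by auto
  show "D = C"
  proof (rule eq_matI)
    fix i j assume "i < dim_row C" "j < dim_col C"
    then have i: "i < n" and j: "j < n"
      using C by auto
    let ?E = "mat n n (\<lambda>(a, b). if a = i \<and> b = j then 1 else 0) :: complex mat"
    have "cnj (D $$ (i, j)) = cnj (C $$ (i, j))"
      using mat_trace_adjoint_mult_unit[OF C i j] mat_trace_adjoint_mult_unit[OF D i j] adj[of ?E] adjD[of ?E]
      by simp
    then show "D $$ (i, j) = C $$ (i, j)"
      by simp
  qed (use C D in auto)
qed

lemma hs_adjoint_eq_if_mult_left:
  assumes tp: "trace_preserving n \<Phi>" and X: "X \<in> carrier_mat n n"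
    and mult: "\<And>A. A \<in> carrier_mat n n \<Longrightarrow> \<Phi> (mat_adjoint X * A) = mat_adjoint Y * \<Phi> A"
  shows "hs_adjoint n \<Phi> Y = X"
proof (rule hs_adjoint_eqI[OF X])
  fix A :: "complex mat" assume A: "A \<in> carrier_mat n n"
  then have "mat_trace (\<Phi> (mat_adjoint X * A)) = mat_trace (mat_adjoint X * A)"
    using tp X unfolding trace_preserving_def by (metis mat_adjoint_carrier mult_carrier_mat)
  then show "mat_trace (mat_adjoint X * A) = mat_trace (mat_adjoint Y * \<Phi> A)"
    using mult[OF A] by simp
qed

theorem lemmaA2:
  fixes n :: nat and \<Phi>1 \<Phi>2 :: "complex mat \<Rightarrow> complex mat" and X Y :: "complex mat"
  assumes lin1: "linear_map_mat n \<Phi>1" and cp1: "completely_positive n \<Phi>1"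
      and tp1: "trace_preserving n \<Phi>1" and un1: "unital n \<Phi>1"
      and lin2: "linear_map_mat n \<Phi>2" and cp2: "completely_positive n \<Phi>2"
      and tp2: "trace_preserving n \<Phi>2" and un2: "unital n \<Phi>2"
      and X: "X \<in> carrier_mat n n" and Y: "Y \<in> carrier_mat n n"
      and XY: "\<Phi>1 X = Y" and YX: "\<Phi>2 Y = X"
  shows "(\<forall>W \<in> carrier_mat n n. \<Phi>1 (X * W) = Y * \<Phi>1 W \<and> \<Phi>1 (W * X) = \<Phi>1 W * Y)
         \<and> cospectral X Y \<and> hs_adjoint n \<Phi>1 Y = X"
proof -
  note eq = schwarz_equality_if_inverse_channels[OF lin1 cp1 tp1 un1 lin2 cp2 tp2 un2]
  have X': "mat_adjoint X \<in> carrier_mat n n" and Y': "mat_adjoint Y \<in> carrier_mat n n"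
    using X Y by auto
  have XY': "\<Phi>1 (mat_adjoint X) = mat_adjoint Y" and YX': "\<Phi>2 (mat_adjoint Y) = mat_adjoint X"
    using completely_positive_mat_adjoint[OF lin1 cp1 X] completely_positive_mat_adjoint[OF lin2 cp2 Y] XY YX
    by auto
  have right: "\<Phi>1 (W * X) = \<Phi>1 W * Y" if "W \<in> carrier_mat n n" for W
    using multiplicative_domain_right[OF lin1 cp1 un1 X _ that] eq[OF X Y XY YX] XY by simp
  have left: "\<Phi>1 (X * W) = Y * \<Phi>1 W" if "W \<in> carrier_mat n n" for W
    using multiplicative_domain_left[OF lin1 cp1 un1 X _ that] eq[OF X' Y' XY' YX'] XY by simp
  have left': "\<Phi>1 (mat_adjoint X * A) = mat_adjoint Y * \<Phi>1 A" if "A \<in> carrier_mat n n" for A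
    using multiplicative_domain_left[OF lin1 cp1 un1 X' _ that] eq[OF X Y XY YX] XY' by simp
  show ?thesis
    using left right cospectral_if_mult_right[OF tp1 un1 X Y right]
      hs_adjoint_eq_if_mult_left[OF tp1 X left'] by blast
qed

end
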